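(* Let $\Lambda\subset(0,\infty)$ with $D_{BM}(\Lambda)=+\infty$. Then there exists an increasing function $\Psi$ on $(0,\infty)$ with $\Psi(s)\nearrow+\infty$ as $s\to\infty$ which admits a family of intervals substantial for $\Psi$.
   Context: For an interval $I$, $n_\Lambda(I)$ denotes the number of points of $\Lambda$ in $I$. For $D>0$, a family of disjoint intervals $I_k=(a_k,b_k)$ with $0<a_1<b_1<a_2<b_2<\cdots$, $a_k\nearrow+\infty$, is called substantial for $D$ if $\frac{n_\Lambda(a_k,b_k)}{b_k-a_k}>D$ for all $k$ and $\sum_k\left(\frac{b_k-a_k}{b_k}\right)^2=+\infty$. The Beurling–Malliavin density of $\Lambda\subset(0,\infty)$ is $D_{BM}(\Lambda)=\sup\{D>0:\text{there exists a family substantial for } D\}$ (and $0$ if no such $D$ exists). For an increasing function $\Psi$ on $(0,\infty)$, a family of disjoint intervals $I_k=(a_k,b_k)\subset(0,\infty)$ is called substantial for $\Psi$ if $\frac{n_\Lambda(a_k,b_k)}{b_k-a_k}>\Psi(b_k-a_k)$ for all $k$ and $\sum_k\left(\frac{b_k-a_k}{b_k}\right)^2=+\infty$. *)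

theory Defs
  imports "HOL-Analysis.Analysis"
begin

text \<open>The counting function n_Lambda(a,b) takes values in the extended naturals:
  it is infinite when Lambda has infinitely many points in (a,b).
  We express "n_Lambda(a,b)/(b-a) > t" accordingly.\<close>

definition count_density_gt :: "real set \<Rightarrow> real \<Rightarrow> real \<Rightarrow> real \<Rightarrow> bool" where
  "count_density_gt \<Lambda> a b t \<longleftrightarrow>
     infinite (\<Lambda> \<inter> {a<..<b}) \<or> real (card (\<Lambda> \<inter> {a<..<b})) / (b - a) > t"

definition substantial_const :: "real set \<Rightarrow> real \<Rightarrow> (nat \<Rightarrow> real) \<Rightarrow> (nat \<Rightarrow> real) \<Rightarrow> bool" where
  "substantial_const \<Lambda> D a b \<longleftrightarrow>
     0 < a 0 \<and> (\<forall>k. a k < b k \<and> b k < a (Suc k)) \<and>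
     filterlim a at_top sequentially \<and>
     (\<forall>k. count_density_gt \<Lambda> (a k) (b k) D) \<and>
     \<not> summable (\<lambda>k. ((b k - a k) / b k)\<^sup>2)"

definition D_BM :: "real set \<Rightarrow> ereal" where
  "D_BM \<Lambda> = Sup ({ereal D | D. D > 0 \<and> (\<exists>a b. substantial_const \<Lambda> D a b)} \<union> {0})"

definition substantial_fun :: "real set \<Rightarrow> (real \<Rightarrow> real) \<Rightarrow> (nat \<Rightarrow> real) \<Rightarrow> (nat \<Rightarrow> real) \<Rightarrow> bool" where
  "substantial_fun \<Lambda> \<Psi> a b \<longleftrightarrow>
     (\<forall>k. 0 \<le> a k \<and> a k < b k) \<and>
     (\<forall>j k. j \<noteq> k \<longrightarrow> {a j<..<b j} \<inter> {a k<..<b k} = {}) \<and>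
     (\<forall>k. count_density_gt \<Lambda> (a k) (b k) (\<Psi> (b k - a k))) \<and>
     \<not> summable (\<lambda>k. ((b k - a k) / b k)\<^sup>2)"

end

theory Submission
  imports Defs
begin

text \<open>
  Since \<open>D_BM \<Lambda> = \<infinity>\<close>, for every \<open>n\<close> some family is substantial for a constant
  \<open>D\<^sub>n > n + 1\<close>. As its series \<open>\<Sum>((b - a)/b)\<^sup>2\<close> diverges while \<open>a\<^sub>k \<rightarrow> \<infinity>\<close>, it contains
  a finite block of intervals beyond any given point with \<open>\<Sum>((b - a)/b)\<^sup>2 \<ge> 1\<close>.
  Choosing these blocks recursively, block \<open>n\<close> lies in \<open>(R\<^sub>n, R\<^sub>n\<^sub>+\<^sub>1]\<close> for an increasing
  sequence \<open>R\<^sub>n \<rightarrow> \<infinity>\<close>. The step function \<open>\<Psi>(s) = #{m. R\<^sub>m < s}\<close> is increasing and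
  unbounded, and satisfies \<open>\<Psi>(b - a) \<le> n + 1 < D\<^sub>n\<close> on block \<open>n\<close>; so the union of all
  blocks is a disjoint family substantial for \<open>\<Psi>\<close>, each block adding at least 1 to the series.
\<close>

lemma not_summable_imp_tail_sum_ge:
  fixes f :: "nat \<Rightarrow> real"
  assumes nonneg: "\<And>n. 0 \<le> f n" and "\<not> summable f"
  shows "\<exists>I. finite I \<and> I \<subseteq> {p..} \<and> M \<le> sum f I"
proof -
  obtain n where n: "sum f {..<p} + M < sum f {..<n}"
    using summableI_nonneg_bounded[of f "sum f {..<p} + M"] nonneg assms(2) by (meson not_le)
  have "sum f {..<n} = sum f ({..<n} \<inter> {..<p}) + sum f ({..<n} - {..<p})"
    by (rule sum.Int_Diff) simp
  also have "sum f ({..<n} \<inter> {..<p}) \<le> sum f {..<p}"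
    by (rule sum_mono2) (auto simp: nonneg)
  finally have "M \<le> sum f ({..<n} - {..<p})"
    using n by linarith
  then show ?thesis
    by (intro exI[of _ "{..<n} - {..<p}"]) auto
qed

lemma count_density_gt_antimono:
  assumes "count_density_gt \<Lambda> x y t" "t' \<le> t"
  shows "count_density_gt \<Lambda> x y t'"
  using assms unfolding count_density_gt_def by auto

lemma D_BM_infinite_imp_substantial_const:
  assumes "D_BM \<Lambda> = \<infinity>"
  shows "\<exists>D a b. r < D \<and> substantial_const \<Lambda> D a b"
proof (rule ccontr)
  assume "\<not> ?thesis"
  then have "D_BM \<Lambda> \<le> ereal \<bar>r\<bar>"
    unfolding D_BM_def by (intro Sup_least) (auto simp: not_less; meson abs_ge_self order_trans)
  with assms show False
    by simp
qed

lemma substantial_const_separated: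
  assumes "substantial_const \<Lambda> D a b" "j < k"
  shows "b j < a k"
proof -
  have ab: "a i < b i \<and> b i < a (Suc i)" for i
    using assms(1) unfolding substantial_const_def by blast
  then have "strict_mono a"
    by (meson order.strict_trans strict_mono_Suc_iff)
  then have "a (Suc j) \<le> a k"
    using assms(2) by (simp add: strict_mono_less_eq)
  with ab[of j] show ?thesis
    by linarith
qed

lemma substantial_const_tail_block:
  assumes "substantial_const \<Lambda> D a b"
  shows "\<exists>I. finite I \<and> (\<forall>k\<in>I. r < a k) \<and> M \<le> (\<Sum>k\<in>I. ((b k - a k) / b k)\<^sup>2)"
proof -
  have "filterlim a at_top sequentially" and diverges: "\<not> summable (\<lambda>k. ((b k - a k) / b k)\<^sup>2)"
    using assms unfolding substantial_const_def by auto
  then obtain p where p: "\<forall>k\<ge>p. r < a k"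
    by (auto simp: filterlim_at_top_dense eventually_sequentially)
  obtain I where "finite I" "I \<subseteq> {p..}" "M \<le> (\<Sum>k\<in>I. ((b k - a k) / b k)\<^sup>2)"
    using not_summable_imp_tail_sum_ge[OF _ diverges] by (meson zero_le_power2)
  with p show ?thesis
    by auto
qed

lemma exists_separated_blocks:
  fixes A B :: "nat \<Rightarrow> nat \<Rightarrow> real" and P :: "nat \<Rightarrow> nat set \<Rightarrow> bool"
  assumes "\<And>n r. \<exists>I. finite I \<and> (\<forall>k\<in>I. r < A n k) \<and> P n I"
  shows "\<exists>R I. mono R \<and> filterlim R at_top sequentially \<and> (\<forall>n. 0 \<le> R n) \<and>
           (\<forall>n. \<forall>k\<in>I n. R n < A n k \<and> B n k \<le> R (Suc n)) \<and> (\<forall>n. P n (I n))"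
proof -
  have "\<forall>n r. \<exists>I. finite I \<and> (\<forall>k\<in>I. r < A n k) \<and> P n I"
    using assms by blast
  then obtain J where J: "\<And>n r. finite (J n r) \<and> (\<forall>k\<in>J n r. r < A n k) \<and> P n (J n r)"
    by metis
  define R where "R = rec_nat 0 (\<lambda>n r. max (r + 1) (Max (B n ` J n r)))"
  have R_Suc: "R (Suc n) = max (R n + 1) (Max (B n ` J n (R n)))" for n
    by (simp add: R_def)
  have R_ge: "real n \<le> R n" for n
    by (induction n) (auto simp: R_def)
  have "mono R"
    by (rule incseq_SucI) (simp add: R_Suc)
  moreover have "filterlim R at_top sequentially"
    by (rule filterlim_at_top_mono[OF filterlim_real_sequentially]) (simp add: R_ge)
  moreover have "R n < A n k \<and> B n k \<le> R (Suc n)" if "k \<in> J n (R n)" for n k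
    using J[of n "R n"] that by (auto simp: R_Suc intro!: max.coboundedI2 Max_ge)
  ultimately show ?thesis
    using J R_ge[THEN order_trans[OF of_nat_0_le_iff]] by (intro exI[of _ R] exI[of _ "\<lambda>n. J n (R n)"]) auto
qed

lemma exists_mono_step_function:
  fixes R :: "nat \<Rightarrow> real"
  assumes "mono R" "filterlim R at_top sequentially"
  shows "\<exists>\<Psi>. mono \<Psi> \<and> filterlim \<Psi> at_top at_top \<and> (\<forall>n s. s \<le> R n \<longrightarrow> \<Psi> s \<le> real n)"
proof -
  define \<Psi> where "\<Psi> s = real (card {m. R m < s})" for s
  have finite: "finite {m. R m < s}" for s
  proof -
    obtain N where "\<forall>m\<ge>N. s \<le> R m"
      using assms(2) by (auto simp: filterlim_at_top eventually_sequentially)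
    then have "{m. R m < s} \<subseteq> {..<N}"
      by (auto simp: not_le[symmetric])
    then show ?thesis
      by (rule finite_subset) simp
  qed
  have "mono \<Psi>"
    unfolding \<Psi>_def by (intro monoI) (auto intro!: card_mono finite)
  moreover have "filterlim \<Psi> at_top at_top"
    unfolding filterlim_at_top eventually_at_top_linorder
  proof
    fix Z :: real
    have "real (nat \<lceil>Z\<rceil>) + 1 \<le> \<Psi> s" if "R (nat \<lceil>Z\<rceil>) < s" for s
    proof -
      have "{..nat \<lceil>Z\<rceil>} \<subseteq> {m. R m < s}"
        using that monoD[OF assms(1)] by (auto intro: order.strict_trans1)
      from card_mono[OF finite this] show ?thesis
        by (simp add: \<Psi>_def)
    qed
    then show "\<exists>N. \<forall>s\<ge>N. Z \<le> \<Psi> s"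
      by (intro exI[of _ "R (nat \<lceil>Z\<rceil>) + 1"]) (smt (verit) real_nat_ceiling_ge)
  qed
  moreover have "\<Psi> s \<le> real n" if "s \<le> R n" for n s
  proof -
    have "{m. R m < s} \<subseteq> {..<n}"
      using that monoD[OF assms(1)] by (force simp: not_less[symmetric])
    then show ?thesis
      unfolding \<Psi>_def by (metis card_lessThan card_mono finite_lessThan of_nat_le_iff)
  qed
  ultimately show ?thesis
    by blast
qed

lemma substantial_fun_of_countable_family:
  fixes a b :: "'i \<Rightarrow> real" and S :: "'i set"
  assumes "countable S"
    and pos: "\<And>i. i \<in> S \<Longrightarrow> 0 \<le> a i \<and> a i < b i"
    and disj: "\<And>i j. i \<in> S \<Longrightarrow> j \<in> S \<Longrightarrow> i \<noteq> j \<Longrightarrow> {a i<..<b i} \<inter> {a j<..<b j} = {}"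
    and dens: "\<And>i. i \<in> S \<Longrightarrow> count_density_gt \<Lambda> (a i) (b i) (\<Psi> (b i - a i))"
    and unbounded: "\<And>M. \<exists>F\<subseteq>S. finite F \<and> M \<le> (\<Sum>i\<in>F. ((b i - a i) / b i)\<^sup>2)"
  shows "\<exists>a' b'. substantial_fun \<Lambda> \<Psi> a' b'"
proof -
  define w where "w i = ((b i - a i) / b i)\<^sup>2" for i
  have "infinite S"
  proof
    assume "finite S"
    obtain F where "F \<subseteq> S" "sum w S + 1 \<le> sum w F"
      using unbounded[of "sum w S + 1"] unfolding w_def by blast
    moreover from this(1) have "sum w F \<le> sum w S"
      using \<open>finite S\<close> by (intro sum_mono2) (auto simp: w_def)
    ultimately show False
      by linarith
  qed
  \<comment> \<open>\<open>substantial_fun\<close> asks for disjoint intervals but no ordering, so any enumeration of \<open>S\<close> works.\<close>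
  define g where "g = from_nat_into S"
  have "bij_betw g UNIV S"
    unfolding g_def using \<open>countable S\<close> \<open>infinite S\<close> by (rule bij_betw_from_nat_into)
  then have "inj g" and range_g: "range g = S"
    by (simp_all add: bij_betw_def)
  have diverges: "\<not> summable (w \<circ> g)"
  proof
    assume summable: "summable (w \<circ> g)"
    obtain F where F: "F \<subseteq> S" "finite F" "suminf (w \<circ> g) + 1 \<le> sum w F"
      using unbounded[of "suminf (w \<circ> g) + 1"] unfolding w_def by blast
    have "bij_betw g (g -` F) F"
      using F(1) \<open>inj g\<close> range_g by (auto simp: bij_betw_def image_vimage_eq intro: inj_on_subset)
    then have "sum w F = sum (w \<circ> g) (g -` F)"
      unfolding o_def by (rule sum.reindex_bij_betw[symmetric])
    also have "\<dots> \<le> suminf (w \<circ> g)"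
    proof (rule sum_le_suminf[OF summable])
      show "finite (g -` F)"
        using F(2) \<open>inj g\<close> by (rule finite_vimageI)
    qed (simp add: w_def)
    finally show False
      using F(3) by linarith
  qed
  have g_in: "g k \<in> S" for k
    using range_g by blast
  have "substantial_fun \<Lambda> \<Psi> (a \<circ> g) (b \<circ> g)"
    unfolding substantial_fun_def
  proof (intro conjI allI impI)
    fix j k :: nat
    show "0 \<le> (a \<circ> g) k" "(a \<circ> g) k < (b \<circ> g) k"
      using pos[OF g_in] by simp_all
    show "count_density_gt \<Lambda> ((a \<circ> g) k) ((b \<circ> g) k) (\<Psi> ((b \<circ> g) k - (a \<circ> g) k))"
      using dens[OF g_in] by simp
    assume "j \<noteq> k"
    then have "g j \<noteq> g k"
      using \<open>inj g\<close> by (simp add: inj_eq)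
    then show "{(a \<circ> g) j<..<(b \<circ> g) j} \<inter> {(a \<circ> g) k<..<(b \<circ> g) k} = {}"
      using disj[OF g_in g_in] by simp
  next
    show "\<not> summable (\<lambda>k. (((b \<circ> g) k - (a \<circ> g) k) / (b \<circ> g) k)\<^sup>2)"
      using diverges by (simp add: w_def o_def)
  qed
  then show ?thesis
    by blast
qed

lemma substantial_fun_of_separated_blocks:
  fixes A B :: "nat \<Rightarrow> nat \<Rightarrow> real" and I :: "nat \<Rightarrow> nat set" and R :: "nat \<Rightarrow> real"
  assumes fam: "\<And>n. substantial_const \<Lambda> (D n) (A n) (B n)"
    and "mono R" and R_nonneg: "\<And>n. 0 \<le> R n"
    and sep: "\<And>n k. k \<in> I n \<Longrightarrow> R n < A n k \<and> B n k \<le> R (Suc n)"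
    and dens: "\<And>n s. s \<le> R (Suc n) \<Longrightarrow> \<Psi> s \<le> D n"
    and weight: "\<And>n. 1 \<le> (\<Sum>k\<in>I n. ((B n k - A n k) / B n k)\<^sup>2)"
  shows "\<exists>a b. substantial_fun \<Lambda> \<Psi> a b"
proof -
  have A_B: "A n k < B n k" for n k
    using fam[of n] unfolding substantial_const_def by blast
  have pos: "0 \<le> A n k \<and> A n k < B n k" if "k \<in> I n" for n k
    using sep[OF that] R_nonneg[of n] A_B[of n k] by linarith
  have before: "B n k \<le> A m l" if "k \<in> I n" "l \<in> I m" "n < m \<or> n = m \<and> k < l" for n k m l
    using that(3)
  proof
    assume "n < m"
    then have "R (Suc n) \<le> R m"
      using monoD[OF \<open>mono R\<close>] by simp
    then show ?thesis
      using sep[OF that(1)] sep[OF that(2)] by linarith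
  qed (use substantial_const_separated[OF fam] in \<open>auto intro: less_imp_le\<close>)
  have disj: "{A n k<..<B n k} \<inter> {A m l<..<B m l} = {}"
    if "k \<in> I n" "l \<in> I m" "(n, k) \<noteq> (m, l)" for n k m l
  proof -
    have "B n k \<le> A m l \<or> B m l \<le> A n k"
      using before[OF that(1,2)] before[OF that(2,1)] that(3)
      by (cases n m rule: linorder_cases; cases k l rule: linorder_cases) auto
    then show ?thesis
      by auto
  qed
  have dens_blocks: "count_density_gt \<Lambda> (A n k) (B n k) (\<Psi> (B n k - A n k))" if "k \<in> I n" for n k
  proof (rule count_density_gt_antimono)
    show "count_density_gt \<Lambda> (A n k) (B n k) (D n)"
      using fam[of n] unfolding substantial_const_def by blast
    show "\<Psi> (B n k - A n k) \<le> D n"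
      using sep[OF that] R_nonneg[of n] by (intro dens) linarith
  qed
  have unbounded: "\<exists>F\<subseteq>Sigma UNIV I. finite F \<and> M \<le> (\<Sum>(n, k)\<in>F. ((B n k - A n k) / B n k)\<^sup>2)"
    for M
  proof (intro exI conjI)
    have "finite (I n)" for n
      using weight[of n] sum.infinite by fastforce
    then show "finite (Sigma {..<nat \<lceil>M\<rceil>} I)"
      by auto
    have "M \<le> (\<Sum>n<nat \<lceil>M\<rceil>. 1)"
      by (simp add: real_nat_ceiling_ge)
    also have "\<dots> \<le> (\<Sum>n<nat \<lceil>M\<rceil>. \<Sum>k\<in>I n. ((B n k - A n k) / B n k)\<^sup>2)"
      by (intro sum_mono weight)
    also have "\<dots> = (\<Sum>(n, k)\<in>Sigma {..<nat \<lceil>M\<rceil>} I. ((B n k - A n k) / B n k)\<^sup>2)"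
      using \<open>finite (I _)\<close> by (intro sum.Sigma) auto
    finally show "M \<le> (\<Sum>(n, k)\<in>Sigma {..<nat \<lceil>M\<rceil>} I. ((B n k - A n k) / B n k)\<^sup>2)" .
  qed auto
  show ?thesis
  proof (rule substantial_fun_of_countable_family[where S = "Sigma UNIV I"
        and a = "\<lambda>i. A (fst i) (snd i)" and b = "\<lambda>i. B (fst i) (snd i)"])
    show "countable (Sigma UNIV I)"
      by (rule countableI_type)
    show "\<exists>F\<subseteq>Sigma UNIV I. finite F \<and>
        M \<le> (\<Sum>i\<in>F. ((B (fst i) (snd i) - A (fst i) (snd i)) / B (fst i) (snd i))\<^sup>2)" for M
      using unbounded[of M] by (simp add: split_def)
    show "0 \<le> A (fst i) (snd i) \<and> A (fst i) (snd i) < B (fst i) (snd i)" if "i \<in> Sigma UNIV I" for i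
      using pos that by (cases i) simp
    show "count_density_gt \<Lambda> (A (fst i) (snd i)) (B (fst i) (snd i))
        (\<Psi> (B (fst i) (snd i) - A (fst i) (snd i)))" if "i \<in> Sigma UNIV I" for i
      using dens_blocks that by (cases i) simp
    show "{A (fst i) (snd i)<..<B (fst i) (snd i)} \<inter> {A (fst j) (snd j)<..<B (fst j) (snd j)} = {}"
      if "i \<in> Sigma UNIV I" "j \<in> Sigma UNIV I" "i \<noteq> j" for i j
      using disj that by (cases i; cases j) simp
  qed
qed

theorem lemma3p2:
  fixes \<Lambda> :: "real set"
  assumes "\<Lambda> \<subseteq> {0<..}"
    and "D_BM \<Lambda> = \<infinity>"
  shows "\<exists>\<Psi> :: real \<Rightarrow> real. mono_on {0<..} \<Psi> \<and> filterlim \<Psi> at_top at_top \<and>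
           (\<exists>a b. substantial_fun \<Lambda> \<Psi> a b)"
proof -
  have "\<forall>n. \<exists>D a b. real (Suc n) < D \<and> substantial_const \<Lambda> D a b"
    using D_BM_infinite_imp_substantial_const[OF assms(2)] by blast
  then obtain D A B where fam: "\<And>n. real (Suc n) < D n \<and> substantial_const \<Lambda> (D n) (A n) (B n)"
    by metis
  have blocks: "\<exists>I. finite I \<and> (\<forall>k\<in>I. r < A n k) \<and> 1 \<le> (\<Sum>k\<in>I. ((B n k - A n k) / B n k)\<^sup>2)"
    for n r
    using fam[of n] by (intro substantial_const_tail_block) blast
  obtain R I where R: "mono R" "filterlim R at_top sequentially" "\<forall>n. 0 \<le> R n"
    and sep: "\<forall>n. \<forall>k\<in>I n. R n < A n k \<and> B n k \<le> R (Suc n)"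
    and weight: "\<forall>n. 1 \<le> (\<Sum>k\<in>I n. ((B n k - A n k) / B n k)\<^sup>2)"
    using exists_separated_blocks[where P = "\<lambda>n I. 1 \<le> (\<Sum>k\<in>I. ((B n k - A n k) / B n k)\<^sup>2)"
        and B = B, OF blocks] by (elim exE conjE)
  obtain \<Psi> where "mono \<Psi>" "filterlim \<Psi> at_top at_top"
    and \<Psi>_le: "\<And>n s. s \<le> R n \<Longrightarrow> \<Psi> s \<le> real n"
    using exists_mono_step_function[OF R(1,2)] by blast
  have \<Psi>_D: "\<Psi> s \<le> D n" if "s \<le> R (Suc n)" for n s
    using \<Psi>_le[OF that] fam[of n] by linarith
  have "\<exists>a b. substantial_fun \<Lambda> \<Psi> a b"
    by (rule substantial_fun_of_separated_blocks[of \<Lambda> D A B R I \<Psi>])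
      (use fam R sep weight \<Psi>_D in auto)
  then show ?thesis
    using \<open>mono \<Psi>\<close> \<open>filterlim \<Psi> at_top at_top\<close> mono_imp_mono_on by blast
qed

end
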